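(* Let $P$ be a projection algebra. If $p_1,\dots,p_k,q_1,\dots,q_l\in P$ satisfy $p_1\,\mathscr F\,p_2\,\mathscr F\cdots\mathscr F\,p_k$ and $q_1\,\mathscr F\,q_2\,\mathscr F\cdots\mathscr F\,q_l$, then $\theta_{p_1}\cdots\theta_{p_k}=\theta_{q_1}\cdots\theta_{q_l}$ implies $p_k=q_l$, and $\delta_{p_k}\cdots\delta_{p_1}=\delta_{q_l}\cdots\delta_{q_1}$ implies $p_1=q_1$.
   Context: Maps are written to the right of their arguments and composed left to right. A projection algebra is a set $P$ with maps $\theta_p,\delta_p:P\to P$ ($p\in P$) such that for all $p,q\in P$: $p\theta_p=p$, $p\delta_p=p$; $p\theta_{q\theta_p}=q\theta_p$, $p\delta_{q\delta_p}=q\delta_p$; $\theta_q\theta_{q\theta_p}=\theta_q\theta_p$, $\delta_q\delta_{q\delta_p}=\delta_q\delta_p$; $\theta_p\delta_p=\theta_p$, $\delta_p\theta_p=\delta_p$; $\theta_{p\delta_q}\theta_p=\theta_q\theta_p$, $\delta_{p\theta_q}\delta_p=\delta_q\delta_p$. The relation $p\,\mathscr F\,q$ means $p=q\delta_p$ and $q=p\theta_q$. *)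

theory Defs
  imports Main
begin

text \<open>Maps act on the right. We encode the map theta_p by th p, so that
  x theta_p is th p x; similarly x delta_p is de p x. A projection algebra
  is a carrier set P with such maps (closed on P) satisfying the axioms;
  equalities of maps are equalities on all of P.\<close>

definition projection_algebra ::
  "'a set \<Rightarrow> ('a \<Rightarrow> 'a \<Rightarrow> 'a) \<Rightarrow> ('a \<Rightarrow> 'a \<Rightarrow> 'a) \<Rightarrow> bool" where
  "projection_algebra P th de \<longleftrightarrow>
    (\<forall>p\<in>P. \<forall>x\<in>P. th p x \<in> P \<and> de p x \<in> P) \<and>
    (\<forall>p\<in>P. th p p = p \<and> de p p = p) \<and>
    (\<forall>p\<in>P. \<forall>q\<in>P. th (th p q) p = th p q \<and> de (de p q) p = de p q) \<and>
    (\<forall>p\<in>P. \<forall>q\<in>P. \<forall>x\<in>P.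
        th (th p q) (th q x) = th p (th q x) \<and> de (de p q) (de q x) = de p (de q x)) \<and>
    (\<forall>p\<in>P. \<forall>x\<in>P. de p (th p x) = th p x \<and> th p (de p x) = de p x) \<and>
    (\<forall>p\<in>P. \<forall>q\<in>P. \<forall>x\<in>P.
        th p (th (de q p) x) = th p (th q x) \<and> de p (de (th q p) x) = de p (de q x))"

definition rel_F :: "('a \<Rightarrow> 'a \<Rightarrow> 'a) \<Rightarrow> ('a \<Rightarrow> 'a \<Rightarrow> 'a) \<Rightarrow> 'a \<Rightarrow> 'a \<Rightarrow> bool" where
  "rel_F th de p q \<longleftrightarrow> p = de p q \<and> q = th q p"

text \<open>theta_{p1} ... theta_{pk} (apply theta_{p1} first): x \<mapsto> fold th ps x.\<close>
definition theta_prod :: "('a \<Rightarrow> 'a \<Rightarrow> 'a) \<Rightarrow> 'a list \<Rightarrow> 'a \<Rightarrow> 'a" where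
  "theta_prod th ps x = fold th ps x"

text \<open>delta_{pk} ... delta_{p1} (apply delta_{pk} first): x \<mapsto> foldr de ps x.\<close>
definition delta_prod :: "('a \<Rightarrow> 'a \<Rightarrow> 'a) \<Rightarrow> 'a list \<Rightarrow> 'a \<Rightarrow> 'a" where
  "delta_prod de ps x = foldr de ps x"

end

theory Submission
  imports Defs
begin

text \<open>Along an \<open>\<F>\<close>-chain \<open>p\<^sub>1 \<F> \<dots> \<F> p\<^sub>k\<close> we have \<open>p\<^sub>i\<^sub>+\<^sub>1 = p\<^sub>i \<theta>\<^bsub>p\<^sub>i\<^sub>+\<^sub>1\<^esub>\<close>, so
  \<open>\<theta>\<^bsub>p\<^sub>1\<^esub>\<cdots>\<theta>\<^bsub>p\<^sub>k\<^esub>\<close> maps \<open>p\<^sub>1\<close> to \<open>p\<^sub>k\<close>. If this product equals \<open>\<theta>\<^bsub>q\<^sub>1\<^esub>\<cdots>\<theta>\<^bsub>q\<^sub>l\<^esub>\<close>,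
  then \<open>p\<^sub>k\<close> lies in the image of \<open>\<theta>\<^bsub>q\<^sub>l\<^esub>\<close> and symmetrically \<open>q\<^sub>l\<close> in that of
  \<open>\<theta>\<^bsub>p\<^sub>k\<^esub>\<close>; since \<open>\<theta>\<^sub>q\<close> is idempotent and \<open>p \<theta>\<^bsub>x\<theta>\<^sub>p\<^esub> = x\<theta>\<^sub>p\<close>, this forces
  \<open>p\<^sub>k = q\<^sub>l\<close>. The axioms are symmetric under exchanging \<open>\<theta>\<close> and \<open>\<delta>\<close>, which
  reverses \<open>\<F>\<close>-chains, so the statement about \<open>\<delta>\<close>-products is the dual one.\<close>

lemma projection_algebra_dual:
  "projection_algebra P th de \<Longrightarrow> projection_algebra P de th"
  unfolding projection_algebra_def by (intro conjI; elim conjE; blast)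

lemma rel_F_dual: "rel_F de th q p \<longleftrightarrow> rel_F th de p q"
  unfolding rel_F_def by blast

lemma successively_rel_F_dual:
  "successively (rel_F de th) (rev ps) \<longleftrightarrow> successively (rel_F th de) ps"
  by (simp add: successively_rev rel_F_dual)

lemma delta_prod_eq_theta_prod_rev: "delta_prod de ps = theta_prod de (rev ps)"
  by (simp add: fun_eq_iff delta_prod_def theta_prod_def foldr_conv_fold)

lemma rel_F_theta: "rel_F th de p q \<Longrightarrow> th q p = q"
  unfolding rel_F_def by (elim conjE) (erule sym)

lemma fold_theta_F_chain:
  "successively (rel_F th de) (p # ps) \<Longrightarrow> fold th ps p = last (p # ps)"
proof (induction ps arbitrary: p)
  case Nil
  show ?case by simp
next
  case (Cons q ps)
  have "rel_F th de p q" "successively (rel_F th de) (q # ps)"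
    using Cons.prems by simp_all
  then have "fold th (q # ps) p = fold th ps q"
    by (simp add: rel_F_theta)
  also have "\<dots> = last (q # ps)"
    using Cons.IH \<open>successively (rel_F th de) (q # ps)\<close> .
  finally show ?case by simp
qed

lemma theta_prod_snoc: "theta_prod th (ps @ [p]) x = th p (theta_prod th ps x)"
  by (simp add: theta_prod_def)

context
  fixes P th de
  assumes PA: "projection_algebra P th de"
begin

lemma theta_closed: "p \<in> P \<Longrightarrow> x \<in> P \<Longrightarrow> th p x \<in> P"
  using PA unfolding projection_algebra_def by (elim conjE) blast

lemma theta_self: "p \<in> P \<Longrightarrow> th p p = p"
  using PA unfolding projection_algebra_def by (elim conjE) blast

lemma theta_theta_image: "p \<in> P \<Longrightarrow> x \<in> P \<Longrightarrow> th (th p x) p = th p x"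
  using PA unfolding projection_algebra_def by (elim conjE) blast

lemma delta_theta: "p \<in> P \<Longrightarrow> x \<in> P \<Longrightarrow> de p (th p x) = th p x"
  using PA unfolding projection_algebra_def by (elim conjE) blast

lemma theta_delta: "p \<in> P \<Longrightarrow> x \<in> P \<Longrightarrow> th p (de p x) = de p x"
  using PA unfolding projection_algebra_def by (elim conjE) blast

lemma theta_idem:
  assumes "p \<in> P" "x \<in> P"
  shows "th p (th p x) = th p x"
proof -
  have "th p (th p x) = th p (de p (th p x))"
    by (simp only: delta_theta assms)
  also have "\<dots> = de p (th p x)"
    by (rule theta_delta[OF assms(1) theta_closed[OF assms]])
  also have "\<dots> = th p x"
    by (rule delta_theta[OF assms])
  finally show ?thesis .
qed

lemma theta_image_antisym:
  assumes "p \<in> P" "q \<in> P" "x \<in> P" "y \<in> P"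
    and p_img: "p = th q x" and q_img: "q = th p y"
  shows "p = q"
proof -
  have "th q p = p"
    unfolding p_img using theta_idem assms(2,3) .
  moreover have "th q p = q"
    unfolding q_img using theta_theta_image assms(1,4) .
  ultimately show ?thesis by simp
qed

lemma theta_prod_closed: "set ps \<subseteq> P \<Longrightarrow> x \<in> P \<Longrightarrow> theta_prod th ps x \<in> P"
  unfolding theta_prod_def
  by (induction ps arbitrary: x) (auto simp: theta_closed)

lemma theta_prod_F_chain_hd:
  assumes "set ps \<subseteq> P" "successively (rel_F th de) ps" "ps \<noteq> []"
  shows "theta_prod th ps (hd ps) = last ps"
proof -
  obtain p ps' where ps: "ps = p # ps'"
    using assms(3) by (cases ps) auto
  with assms(1) have "th p p = p"
    by (simp add: theta_self)
  with ps assms(2) show ?thesis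
    by (simp add: theta_prod_def fold_theta_F_chain)
qed

lemma F_chain_last_in_theta_image:
  assumes "set ps \<subseteq> P" "successively (rel_F th de) ps" "ps \<noteq> []"
    and "set qs \<subseteq> P" "qs \<noteq> []"
    and "\<forall>x\<in>P. theta_prod th ps x = theta_prod th qs x"
  obtains x where "x \<in> P" "last ps = th (last qs) x"
proof -
  obtain qs' q where qs: "qs = qs' @ [q]"
    using assms(5) rev_exhaust by blast
  have hd_in: "hd ps \<in> P"
    using assms(1,3) by auto
  have "last ps = theta_prod th ps (hd ps)"
    using theta_prod_F_chain_hd[OF assms(1-3)] by (rule sym)
  also have "\<dots> = theta_prod th qs (hd ps)"
    using assms(6) hd_in by (rule bspec)
  also have "\<dots> = th (last qs) (theta_prod th qs' (hd ps))"
    by (simp add: qs theta_prod_snoc)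
  finally have "last ps = th (last qs) (theta_prod th qs' (hd ps))" .
  moreover have "theta_prod th qs' (hd ps) \<in> P"
    using theta_prod_closed hd_in assms(4) qs by simp
  ultimately show thesis
    using that by blast
qed

lemma F_chain_theta_prod_eq_last_eq:
  assumes ps: "set ps \<subseteq> P" "successively (rel_F th de) ps" "ps \<noteq> []"
    and qs: "set qs \<subseteq> P" "successively (rel_F th de) qs" "qs \<noteq> []"
    and eq: "\<forall>x\<in>P. theta_prod th ps x = theta_prod th qs x"
  shows "last ps = last qs"
proof -
  obtain x where x: "x \<in> P" "last ps = th (last qs) x"
    using F_chain_last_in_theta_image[OF ps qs(1,3) eq] .
  have eq': "\<forall>x\<in>P. theta_prod th qs x = theta_prod th ps x"
    using eq by simp
  obtain y where y: "y \<in> P" "last qs = th (last ps) y"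
    using F_chain_last_in_theta_image[OF qs ps(1,3) eq'] .
  have last_in: "last ps \<in> P" "last qs \<in> P"
    using ps(1,3) qs(1,3) by auto
  show ?thesis
    by (rule theta_image_antisym[OF last_in x(1) y(1) x(2) y(2)])
qed

end

theorem lemma4p14:
  assumes PA: "projection_algebra P th de"
    and ps: "ps \<noteq> []" "set ps \<subseteq> P" "successively (rel_F th de) ps"
    and qs: "qs \<noteq> []" "set qs \<subseteq> P" "successively (rel_F th de) qs"
  shows "((\<forall>x\<in>P. theta_prod th ps x = theta_prod th qs x) \<longrightarrow> last ps = last qs)
       \<and> ((\<forall>x\<in>P. delta_prod de ps x = delta_prod de qs x) \<longrightarrow> hd ps = hd qs)"
proof (intro conjI impI)
  show "last ps = last qs" if "\<forall>x\<in>P. theta_prod th ps x = theta_prod th qs x"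
    by (rule F_chain_theta_prod_eq_last_eq[OF PA ps(2,3,1) qs(2,3,1) that])
  show "hd ps = hd qs" if "\<forall>x\<in>P. delta_prod de ps x = delta_prod de qs x"
  proof -
    have "last (rev ps) = last (rev qs)"
    proof (rule F_chain_theta_prod_eq_last_eq[OF projection_algebra_dual[OF PA]])
      show "successively (rel_F de th) (rev ps)" "successively (rel_F de th) (rev qs)"
        using ps(3) qs(3) by (simp_all only: successively_rel_F_dual)
      show "\<forall>x\<in>P. theta_prod de (rev ps) x = theta_prod de (rev qs) x"
        using that by (simp add: delta_prod_eq_theta_prod_rev)
    qed (use ps qs in auto)
    then show ?thesis
      using ps(1) qs(1) by (simp add: last_rev)
  qed
qed

end
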